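(* Let $R$ be a ring. Let $(M_\alpha,\varphi_{\alpha\beta})$ be an inverse system of injective left $R$-modules indexed by a countable upward directed poset $I$, with surjective homomorphisms $\varphi_{\alpha\beta}:M_\beta\to M_\alpha$ ($\alpha\le\beta$), and let $M=\varprojlim M_\alpha$ with canonical maps $\pi_\alpha:M\to M_\alpha$. Let $(N_\gamma,\psi_{\delta\gamma})$ be a direct system of projective left $R$-modules indexed by a countable upward directed poset $J$, with one-to-one homomorphisms $\psi_{\delta\gamma}:N_\gamma\to N_\delta$ ($\gamma\le\delta$), and let $N=\varinjlim N_\gamma$ with canonical maps $\iota_\gamma:N_\gamma\to N$. Then for any $\gamma\in J$, $\alpha\in I$ and any homomorphism $f:N_\gamma\to M_\alpha$, there exists a homomorphism $h:N\to M$ such that $f=\pi_\alpha\circ h\circ\iota_\gamma$.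
   Context: Rings are associative with unit, modules are unital. In both the direct and inverse systems the index sets are upward directed; connecting maps of the inverse system go from higher to lower indices, those of the direct system from lower to higher indices. *)

theory Defs
  imports "HOL-Algebra.Module" "HOL-Library.Countable_Set"
begin

text \<open>HOL-Algebra's locale module requires a commutative ring, so left modules
over an arbitrary associative unital ring are defined here.\<close>

definition left_module :: "('a, 'r) ring_scheme \<Rightarrow> ('a, 'b, 'm) module_scheme \<Rightarrow> bool" where
  "left_module R M \<longleftrightarrow> ring R \<and> abelian_group M \<and>
     (\<forall>a\<in>carrier R. \<forall>x\<in>carrier M. a \<odot>\<^bsub>M\<^esub> x \<in> carrier M) \<and>
     (\<forall>a\<in>carrier R. \<forall>b\<in>carrier R. \<forall>x\<in>carrier M.
        (a \<oplus>\<^bsub>R\<^esub> b) \<odot>\<^bsub>M\<^esub> x = (a \<odot>\<^bsub>M\<^esub> x) \<oplus>\<^bsub>M\<^esub> (b \<odot>\<^bsub>M\<^esub> x)) \<and>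
     (\<forall>a\<in>carrier R. \<forall>x\<in>carrier M. \<forall>y\<in>carrier M.
        a \<odot>\<^bsub>M\<^esub> (x \<oplus>\<^bsub>M\<^esub> y) = (a \<odot>\<^bsub>M\<^esub> x) \<oplus>\<^bsub>M\<^esub> (a \<odot>\<^bsub>M\<^esub> y)) \<and>
     (\<forall>a\<in>carrier R. \<forall>b\<in>carrier R. \<forall>x\<in>carrier M.
        (a \<otimes>\<^bsub>R\<^esub> b) \<odot>\<^bsub>M\<^esub> x = a \<odot>\<^bsub>M\<^esub> (b \<odot>\<^bsub>M\<^esub> x)) \<and>
     (\<forall>x\<in>carrier M. \<one>\<^bsub>R\<^esub> \<odot>\<^bsub>M\<^esub> x = x)"

definition mod_hom ::
  "('a, 'r) ring_scheme \<Rightarrow> ('a, 'b, 'm) module_scheme \<Rightarrow> ('a, 'c, 'n) module_scheme \<Rightarrow> ('b \<Rightarrow> 'c) set" where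
  "mod_hom R M N = {f. f \<in> carrier M \<rightarrow> carrier N \<and>
     (\<forall>x\<in>carrier M. \<forall>y\<in>carrier M. f (x \<oplus>\<^bsub>M\<^esub> y) = f x \<oplus>\<^bsub>N\<^esub> f y) \<and>
     (\<forall>a\<in>carrier R. \<forall>x\<in>carrier M. f (a \<odot>\<^bsub>M\<^esub> x) = a \<odot>\<^bsub>N\<^esub> f x)}"

text \<open>In HOL a definition cannot quantify over all types, so the defining
extension/lifting properties are stated relative to test modules whose
carriers live in given types 'x and 'y.\<close>

definition injective_module_wrt ::
  "'x itself \<Rightarrow> 'y itself \<Rightarrow> ('a, 'r) ring_scheme \<Rightarrow> ('a, 'b, 'm) module_scheme \<Rightarrow> bool" where
  "injective_module_wrt (tx :: 'x itself) (ty :: 'y itself) R Q \<longleftrightarrow> left_module R Q \<and>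
     (\<forall>(A :: ('a, 'x) module) (B :: ('a, 'y) module) i f.
        left_module R A \<and> left_module R B \<and> i \<in> mod_hom R A B \<and> inj_on i (carrier A) \<and>
        f \<in> mod_hom R A Q \<longrightarrow>
        (\<exists>g\<in>mod_hom R B Q. \<forall>x\<in>carrier A. g (i x) = f x))"

definition projective_module_wrt ::
  "'x itself \<Rightarrow> 'y itself \<Rightarrow> ('a, 'r) ring_scheme \<Rightarrow> ('a, 'b, 'm) module_scheme \<Rightarrow> bool" where
  "projective_module_wrt (tx :: 'x itself) (ty :: 'y itself) R P \<longleftrightarrow> left_module R P \<and>
     (\<forall>(B :: ('a, 'x) module) (C :: ('a, 'y) module) g f.
        left_module R B \<and> left_module R C \<and> g \<in> mod_hom R B C \<and> g ` carrier B = carrier C \<and>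
        f \<in> mod_hom R P C \<longrightarrow>
        (\<exists>h\<in>mod_hom R P B. \<forall>x\<in>carrier P. g (h x) = f x))"

text \<open>Injectivity: test modules on the ring's own element type suffice (Baer's
criterion: left ideals into R). Projectivity: test with the free module on the
carrier of P (finitely supported functions 'b => 'a) surjecting onto P. So these
are equivalent to the usual (type-unrestricted) notions.\<close>

definition injective_module :: "('a, 'r) ring_scheme \<Rightarrow> ('a, 'b, 'm) module_scheme \<Rightarrow> bool" where
  "injective_module R Q \<longleftrightarrow> injective_module_wrt TYPE('a) TYPE('a) R Q"

definition projective_module :: "('a, 'r) ring_scheme \<Rightarrow> ('a, 'b, 'm) module_scheme \<Rightarrow> bool" where
  "projective_module R P \<longleftrightarrow> projective_module_wrt TYPE('b \<Rightarrow> 'a) TYPE('b) R P"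

definition directed_poset :: "'i set \<Rightarrow> ('i \<Rightarrow> 'i \<Rightarrow> bool) \<Rightarrow> bool" where
  "directed_poset I leq \<longleftrightarrow> I \<noteq> {} \<and>
     (\<forall>a\<in>I. leq a a) \<and>
     (\<forall>a\<in>I. \<forall>b\<in>I. leq a b \<and> leq b a \<longrightarrow> a = b) \<and>
     (\<forall>a\<in>I. \<forall>b\<in>I. \<forall>c\<in>I. leq a b \<and> leq b c \<longrightarrow> leq a c) \<and>
     (\<forall>a\<in>I. \<forall>b\<in>I. \<exists>c\<in>I. leq a c \<and> leq b c)"

definition inverse_system ::
  "('a, 'r) ring_scheme \<Rightarrow> 'i set \<Rightarrow> ('i \<Rightarrow> 'i \<Rightarrow> bool) \<Rightarrow> ('i \<Rightarrow> ('a, 'm) module) \<Rightarrow>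
   ('i \<Rightarrow> 'i \<Rightarrow> 'm \<Rightarrow> 'm) \<Rightarrow> bool" where
  "inverse_system R I leq M phi \<longleftrightarrow> directed_poset I leq \<and>
     (\<forall>a\<in>I. left_module R (M a)) \<and>
     (\<forall>a\<in>I. \<forall>b\<in>I. leq a b \<longrightarrow> phi a b \<in> mod_hom R (M b) (M a)) \<and>
     (\<forall>a\<in>I. \<forall>x\<in>carrier (M a). phi a a x = x) \<and>
     (\<forall>a\<in>I. \<forall>b\<in>I. \<forall>c\<in>I. leq a b \<and> leq b c \<longrightarrow>
        (\<forall>x\<in>carrier (M c). phi a b (phi b c x) = phi a c x))"

definition inverse_limit ::
  "('a, 'r) ring_scheme \<Rightarrow> 'i set \<Rightarrow> ('i \<Rightarrow> 'i \<Rightarrow> bool) \<Rightarrow> ('i \<Rightarrow> ('a, 'm) module) \<Rightarrow>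
   ('i \<Rightarrow> 'i \<Rightarrow> 'm \<Rightarrow> 'm) \<Rightarrow> ('a, 'l) module \<Rightarrow> ('i \<Rightarrow> 'l \<Rightarrow> 'm) \<Rightarrow> bool" where
  "inverse_limit R I leq M phi L pi \<longleftrightarrow> left_module R L \<and>
     (\<forall>a\<in>I. pi a \<in> mod_hom R L (M a)) \<and>
     (\<forall>a\<in>I. \<forall>b\<in>I. leq a b \<longrightarrow> (\<forall>x\<in>carrier L. phi a b (pi b x) = pi a x)) \<and>
     (\<forall>t. (\<forall>a\<in>I. t a \<in> carrier (M a)) \<and>
          (\<forall>a\<in>I. \<forall>b\<in>I. leq a b \<longrightarrow> phi a b (t b) = t a) \<longrightarrow>
          (\<exists>!x. x \<in> carrier L \<and> (\<forall>a\<in>I. pi a x = t a)))"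

definition direct_system ::
  "('a, 'r) ring_scheme \<Rightarrow> 'j set \<Rightarrow> ('j \<Rightarrow> 'j \<Rightarrow> bool) \<Rightarrow> ('j \<Rightarrow> ('a, 'n) module) \<Rightarrow>
   ('j \<Rightarrow> 'j \<Rightarrow> 'n \<Rightarrow> 'n) \<Rightarrow> bool" where
  "direct_system R J leq N psi \<longleftrightarrow> directed_poset J leq \<and>
     (\<forall>g\<in>J. left_module R (N g)) \<and>
     (\<forall>g\<in>J. \<forall>d\<in>J. leq g d \<longrightarrow> psi d g \<in> mod_hom R (N g) (N d)) \<and>
     (\<forall>g\<in>J. \<forall>x\<in>carrier (N g). psi g g x = x) \<and>
     (\<forall>g\<in>J. \<forall>d\<in>J. \<forall>e\<in>J. leq g d \<and> leq d e \<longrightarrow>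
        (\<forall>x\<in>carrier (N g). psi e d (psi d g x) = psi e g x))"

text \<open>L with maps iota is the direct limit (standard description of directed
colimits of modules): iota are compatible homomorphisms, L is the union of their
images, and iota g x = 0 only if x already dies at some later stage.\<close>

definition direct_limit ::
  "('a, 'r) ring_scheme \<Rightarrow> 'j set \<Rightarrow> ('j \<Rightarrow> 'j \<Rightarrow> bool) \<Rightarrow> ('j \<Rightarrow> ('a, 'n) module) \<Rightarrow>
   ('j \<Rightarrow> 'j \<Rightarrow> 'n \<Rightarrow> 'n) \<Rightarrow> ('a, 'k) module \<Rightarrow> ('j \<Rightarrow> 'n \<Rightarrow> 'k) \<Rightarrow> bool" where
  "direct_limit R J leq N psi L iota \<longleftrightarrow> left_module R L \<and>
     (\<forall>g\<in>J. iota g \<in> mod_hom R (N g) L) \<and>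
     (\<forall>g\<in>J. \<forall>d\<in>J. leq g d \<longrightarrow> (\<forall>x\<in>carrier (N g). iota d (psi d g x) = iota g x)) \<and>
     carrier L = (\<Union>g\<in>J. iota g ` carrier (N g)) \<and>
     (\<forall>g\<in>J. \<forall>x\<in>carrier (N g). iota g x = \<zero>\<^bsub>L\<^esub> \<longrightarrow>
        (\<exists>d\<in>J. leq g d \<and> psi d g x = \<zero>\<^bsub>N d\<^esub>))"

end

theory Submission
  imports Defs "HOL-Algebra.AbelCoset"
begin

(* Choose cofinal chains gamma = g0 <= g1 <= ... in J and alpha = a0 <= a1 <= ... in I; this
   is possible because both index sets are countable and directed.  Starting from f_0 = f,
   build f_(n+1) : N_(g(n+1)) -> M_(a(n+1)) from f_n in two moves: extend f_n along the
   monomorphism psi : N_(g n) -> N_(g(n+1)) (M_(a n) is injective), then lift the extension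
   through the epimorphism phi : M_(a(n+1)) -> M_(a n) (N_(g(n+1)) is projective).  The
   resulting tower is compatible: phi o f_m o psi = f_n for n <= m.

   Since the transition maps psi are injective, so are the canonical maps iota into the
   direct limit, and a compatible family along a cofinal chain induces a homomorphism out of
   N.  Doing this for every index of I gives a compatible cone from N over the inverse
   system, which the universal property of the inverse limit turns into h : N -> M. *)

lemma left_module_abelian_group: "left_module R A \<Longrightarrow> abelian_group A"
  unfolding left_module_def by blast

(* A module homomorphism is a homomorphism of the additive groups, so the library's
   facts about zero and negation apply to it. *)
lemma mod_hom_abelian_group_hom:
  assumes A: "left_module R A" and B: "left_module R B" and f: "f \<in> mod_hom R A B"
  shows "abelian_group_hom A B f"
proof -
  interpret A: abelian_group A using left_module_abelian_group[OF A] .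
  interpret B: abelian_group B using left_module_abelian_group[OF B] .
  have "f \<in> hom (add_monoid A) (add_monoid B)"
    using f unfolding mod_hom_def hom_def by simp
  then show ?thesis
    by (intro abelian_group_homI A.abelian_group_axioms B.abelian_group_axioms
        group_hom.intro group_hom_axioms.intro A.a_group B.a_group)
qed

lemma mod_hom_closed: "f \<in> mod_hom R A B \<Longrightarrow> x \<in> carrier A \<Longrightarrow> f x \<in> carrier B"
  unfolding mod_hom_def by blast

lemma mod_hom_add:
  "f \<in> mod_hom R A B \<Longrightarrow> x \<in> carrier A \<Longrightarrow> y \<in> carrier A \<Longrightarrow> f (x \<oplus>\<^bsub>A\<^esub> y) = f x \<oplus>\<^bsub>B\<^esub> f y"
  unfolding mod_hom_def by blast

lemma mod_hom_smult:
  "f \<in> mod_hom R A B \<Longrightarrow> r \<in> carrier R \<Longrightarrow> x \<in> carrier A \<Longrightarrow> f (r \<odot>\<^bsub>A\<^esub> x) = r \<odot>\<^bsub>B\<^esub> f x"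
  unfolding mod_hom_def by blast

lemma left_module_add_closed:
  assumes "left_module R A" and "x \<in> carrier A" and "y \<in> carrier A"
  shows "x \<oplus>\<^bsub>A\<^esub> y \<in> carrier A"
proof -
  interpret abelian_group A using left_module_abelian_group[OF assms(1)] .
  show ?thesis using assms(2,3) by simp
qed

lemma left_module_smult_closed:
  "left_module R A \<Longrightarrow> r \<in> carrier R \<Longrightarrow> x \<in> carrier A \<Longrightarrow> r \<odot>\<^bsub>A\<^esub> x \<in> carrier A"
  unfolding left_module_def by blast

lemma mod_hom_comp:
  "g \<in> mod_hom R B C \<Longrightarrow> f \<in> mod_hom R A B \<Longrightarrow> (\<lambda>x. g (f x)) \<in> mod_hom R A C"
  unfolding mod_hom_def by (simp add: Pi_iff)

lemma directed_posetD:
  assumes "directed_poset I leq"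
  shows "I \<noteq> {}"
    and "\<And>a. a \<in> I \<Longrightarrow> leq a a"
    and "\<And>a b c. a \<in> I \<Longrightarrow> b \<in> I \<Longrightarrow> c \<in> I \<Longrightarrow> leq a b \<Longrightarrow> leq b c \<Longrightarrow> leq a c"
    and "\<And>a b. a \<in> I \<Longrightarrow> b \<in> I \<Longrightarrow> \<exists>c\<in>I. leq a c \<and> leq b c"
  using assms unfolding directed_poset_def by blast+

lemma inverse_systemD:
  assumes "inverse_system R I leq M phi"
  shows "directed_poset I leq"
    and "\<And>a. a \<in> I \<Longrightarrow> left_module R (M a)"
    and "\<And>a b. a \<in> I \<Longrightarrow> b \<in> I \<Longrightarrow> leq a b \<Longrightarrow> phi a b \<in> mod_hom R (M b) (M a)"
    and "\<And>a x. a \<in> I \<Longrightarrow> x \<in> carrier (M a) \<Longrightarrow> phi a a x = x"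
    and "\<And>a b c x. a \<in> I \<Longrightarrow> b \<in> I \<Longrightarrow> c \<in> I \<Longrightarrow> leq a b \<Longrightarrow> leq b c \<Longrightarrow>
           x \<in> carrier (M c) \<Longrightarrow> phi a b (phi b c x) = phi a c x"
  using assms unfolding inverse_system_def by simp_all

lemma direct_systemD:
  assumes "direct_system R J leq N psi"
  shows "directed_poset J leq"
    and "\<And>g. g \<in> J \<Longrightarrow> left_module R (N g)"
    and "\<And>g d. g \<in> J \<Longrightarrow> d \<in> J \<Longrightarrow> leq g d \<Longrightarrow> psi d g \<in> mod_hom R (N g) (N d)"
    and "\<And>g x. g \<in> J \<Longrightarrow> x \<in> carrier (N g) \<Longrightarrow> psi g g x = x"
    and "\<And>g d e x. g \<in> J \<Longrightarrow> d \<in> J \<Longrightarrow> e \<in> J \<Longrightarrow> leq g d \<Longrightarrow> leq d e \<Longrightarrow>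
           x \<in> carrier (N g) \<Longrightarrow> psi e d (psi d g x) = psi e g x"
  using assms unfolding direct_system_def by simp_all

lemma inverse_limitD:
  assumes "inverse_limit R I leq M phi L pi"
  shows "left_module R L"
    and "\<And>a. a \<in> I \<Longrightarrow> pi a \<in> mod_hom R L (M a)"
    and "\<And>t. \<forall>a\<in>I. t a \<in> carrier (M a) \<Longrightarrow> \<forall>a\<in>I. \<forall>b\<in>I. leq a b \<longrightarrow> phi a b (t b) = t a \<Longrightarrow>
           \<exists>!x. x \<in> carrier L \<and> (\<forall>a\<in>I. pi a x = t a)"
  using assms unfolding inverse_limit_def by simp_all

lemma direct_limitD:
  assumes "direct_limit R J leq N psi L iota"
  shows "left_module R L"
    and "\<And>g. g \<in> J \<Longrightarrow> iota g \<in> mod_hom R (N g) L"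
    and "\<And>g d x. g \<in> J \<Longrightarrow> d \<in> J \<Longrightarrow> leq g d \<Longrightarrow> x \<in> carrier (N g) \<Longrightarrow>
           iota d (psi d g x) = iota g x"
    and "carrier L = (\<Union>g\<in>J. iota g ` carrier (N g))"
    and "\<And>g x. g \<in> J \<Longrightarrow> x \<in> carrier (N g) \<Longrightarrow> iota g x = \<zero>\<^bsub>L\<^esub> \<Longrightarrow>
           \<exists>d\<in>J. leq g d \<and> psi d g x = \<zero>\<^bsub>N d\<^esub>"
  using assms unfolding direct_limit_def by simp_all

definition monotone_chain :: "'i set \<Rightarrow> ('i \<Rightarrow> 'i \<Rightarrow> bool) \<Rightarrow> (nat \<Rightarrow> 'i) \<Rightarrow> bool" where
  "monotone_chain I leq c \<longleftrightarrow> (\<forall>n. c n \<in> I) \<and> (\<forall>n m. n \<le> m \<longrightarrow> leq (c n) (c m))"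

definition cofinal_chain :: "'i set \<Rightarrow> ('i \<Rightarrow> 'i \<Rightarrow> bool) \<Rightarrow> (nat \<Rightarrow> 'i) \<Rightarrow> bool" where
  "cofinal_chain I leq c \<longleftrightarrow> monotone_chain I leq c \<and> (\<forall>a\<in>I. \<exists>k. \<forall>m\<ge>k. leq a (c m))"

(* A countable directed poset has a cofinal chain through any given element: enumerate
   the poset and at step n pass to an upper bound of the current element and the n-th one. *)
lemma cofinal_chain_exists:
  assumes dir: "directed_poset I leq" and cnt: "countable I" and a: "a \<in> I"
  shows "\<exists>c. cofinal_chain I leq c \<and> c 0 = a"
proof -
  note refl = directed_posetD(2)[OF dir] and trans = directed_posetD(3)[OF dir]
    and upper = directed_posetD(4)[OF dir]
  define e where "e = from_nat_into I"
  have e: "e n \<in> I" for n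
    using from_nat_into[OF directed_posetD(1)[OF dir]] unfolding e_def .
  obtain c where c: "\<forall>n. (c n \<in> I \<and> (n = 0 \<longrightarrow> c n = a)) \<and>
                          leq (c n) (c (Suc n)) \<and> leq (e n) (c (Suc n))"
  proof (atomize_elim, rule dependent_nat_choice)
    show "\<exists>x. x \<in> I \<and> (0 = (0::nat) \<longrightarrow> x = a)" using a by blast
  next
    fix x and n :: nat assume "x \<in> I \<and> (n = 0 \<longrightarrow> x = a)"
    then show "\<exists>y. (y \<in> I \<and> (Suc n = 0 \<longrightarrow> y = a)) \<and> leq x y \<and> leq (e n) y"
      using upper[of x "e n"] e by auto
  qed
  have mono: "leq (c n) (c m)" if "n \<le> m" for n m
    using that
  proof (induction m rule: dec_induct)
    case base
    show ?case using refl c by blast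
  next
    case (step m)
    show ?case using trans[OF _ _ _ step.IH] c by blast
  qed
  have "\<exists>k. \<forall>m\<ge>k. leq b (c m)" if b: "b \<in> I" for b
  proof -
    obtain n where n: "e n = b" using from_nat_into_surj[OF cnt b] unfolding e_def by blast
    have "leq b (c m)" if "Suc n \<le> m" for m
      using trans[OF b _ _ _ mono[OF that]] c n by blast
    then show ?thesis by blast
  qed
  then show ?thesis
    unfolding cofinal_chain_def monotone_chain_def using c mono by blast
qed

lemma extend_and_lift:
  fixes A B :: "('a, 'n) module" and C D :: "('a, 'm) module"
  assumes C: "injective_module_wrt TYPE('n) TYPE('n) R C"
    and B: "projective_module_wrt TYPE('m) TYPE('m) R B"
    and A: "left_module R A" and D: "left_module R D"
    and i: "i \<in> mod_hom R A B" and i_inj: "inj_on i (carrier A)"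
    and p: "p \<in> mod_hom R D C" and p_surj: "p ` carrier D = carrier C"
    and f: "f \<in> mod_hom R A C"
  shows "\<exists>G\<in>mod_hom R B D. \<forall>x\<in>carrier A. p (G (i x)) = f x"
proof -
  have B_mod: "left_module R B" and C_mod: "left_module R C"
    using B C unfolding projective_module_wrt_def injective_module_wrt_def by blast+
  obtain g where g: "g \<in> mod_hom R B C" and gi: "\<forall>x\<in>carrier A. g (i x) = f x"
    using C A B_mod i i_inj f unfolding injective_module_wrt_def by blast
  obtain G where G: "G \<in> mod_hom R B D" and pG: "\<forall>y\<in>carrier B. p (G y) = g y"
    using B D C_mod p p_surj g unfolding projective_module_wrt_def by blast
  have "\<forall>x\<in>carrier A. p (G (i x)) = f x"
    using pG gi mod_hom_closed[OF i] by simp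
  then show ?thesis using G by blast
qed

definition compatible_tower ::
  "('a, 'r) ring_scheme \<Rightarrow> ('i \<Rightarrow> ('a, 'm) module) \<Rightarrow> ('i \<Rightarrow> 'i \<Rightarrow> 'm \<Rightarrow> 'm) \<Rightarrow>
   ('j \<Rightarrow> ('a, 'n) module) \<Rightarrow> ('j \<Rightarrow> 'j \<Rightarrow> 'n \<Rightarrow> 'n) \<Rightarrow>
   (nat \<Rightarrow> 'i) \<Rightarrow> (nat \<Rightarrow> 'j) \<Rightarrow> (nat \<Rightarrow> 'n \<Rightarrow> 'm) \<Rightarrow> bool" where
  "compatible_tower R M phi N psi as gs fs \<longleftrightarrow>
     (\<forall>n. fs n \<in> mod_hom R (N (gs n)) (M (as n))) \<and>
     (\<forall>n m. n \<le> m \<longrightarrow>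
        (\<forall>x\<in>carrier (N (gs n)). phi (as n) (as m) (fs m (psi (gs m) (gs n) x)) = fs n x))"

lemma tower_telescope:
  assumes inv: "inverse_system R I leI M phi" and dir: "direct_system R J leJ N psi"
    and as: "monotone_chain I leI as" and gs: "monotone_chain J leJ gs"
    and fs: "\<forall>n. fs n \<in> mod_hom R (N (gs n)) (M (as n))"
    and one_step: "\<forall>n. \<forall>x\<in>carrier (N (gs n)).
                 phi (as n) (as (Suc n)) (fs (Suc n) (psi (gs (Suc n)) (gs n) x)) = fs n x"
  shows "compatible_tower R M phi N psi as gs fs"
proof -
  have asI: "as n \<in> I" and as_mono: "n \<le> m \<Longrightarrow> leI (as n) (as m)"
    and gsJ: "gs n \<in> J" and gs_mono: "n \<le> m \<Longrightarrow> leJ (gs n) (gs m)" for n m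
    using as gs unfolding monotone_chain_def by blast+
  have psi_closed: "psi (gs m) (gs n) x \<in> carrier (N (gs m))"
    if "n \<le> m" and "x \<in> carrier (N (gs n))" for n m x
    using mod_hom_closed[OF direct_systemD(3)[OF dir gsJ gsJ gs_mono[OF that(1)]] that(2)] .
  have "phi (as n) (as m) (fs m (psi (gs m) (gs n) x)) = fs n x"
    if nm: "n \<le> m" and x: "x \<in> carrier (N (gs n))" for n m x
    using nm
  proof (induction m rule: dec_induct)
    case base
    show ?case
      using direct_systemD(4)[OF dir gsJ x] inverse_systemD(4)[OF inv asI]
        mod_hom_closed[OF fs[rule_format] x] by simp
  next
    case (step m)
    let ?y = "psi (gs m) (gs n) x"
    have y: "?y \<in> carrier (N (gs m))" using psi_closed[OF step.hyps(1) x] .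
    have split: "psi (gs (Suc m)) (gs n) x = psi (gs (Suc m)) (gs m) ?y"
      using direct_systemD(5)[OF dir gsJ gsJ gsJ gs_mono[OF step.hyps(1)] gs_mono x] by simp
    have z: "fs (Suc m) (psi (gs (Suc m)) (gs n) x) \<in> carrier (M (as (Suc m)))"
      using mod_hom_closed[OF fs[rule_format] psi_closed[OF _ x]] step.hyps(1) by simp
    have fs_eq: "phi (as m) (as (Suc m)) (fs (Suc m) (psi (gs (Suc m)) (gs n) x)) = fs m ?y"
      unfolding split using one_step y by blast
    have "phi (as n) (as (Suc m)) (fs (Suc m) (psi (gs (Suc m)) (gs n) x))
        = phi (as n) (as m) (phi (as m) (as (Suc m)) (fs (Suc m) (psi (gs (Suc m)) (gs n) x)))"
      using inverse_systemD(5)[OF inv asI asI asI as_mono[OF step.hyps(1)] as_mono z] by simp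
    also have "\<dots> = fs n x" using fs_eq step.IH by simp
    finally show ?case .
  qed
  then show ?thesis unfolding compatible_tower_def using fs by blast
qed

lemma tower_exists:
  fixes M :: "'i \<Rightarrow> ('a, 'm) module" and N :: "'j \<Rightarrow> ('a, 'n) module"
  assumes inv: "inverse_system R I leI M phi"
    and phi_surj: "\<forall>a\<in>I. \<forall>b\<in>I. leI a b \<longrightarrow> phi a b ` carrier (M b) = carrier (M a)"
    and M_inj: "\<forall>a\<in>I. injective_module_wrt TYPE('n) TYPE('n) R (M a)"
    and dir: "direct_system R J leJ N psi"
    and psi_inj: "\<forall>g\<in>J. \<forall>d\<in>J. leJ g d \<longrightarrow> inj_on (psi d g) (carrier (N g))"
    and N_proj: "\<forall>g\<in>J. projective_module_wrt TYPE('m) TYPE('m) R (N g)"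
    and as: "monotone_chain I leI as" and gs: "monotone_chain J leJ gs"
    and f: "f \<in> mod_hom R (N (gs 0)) (M (as 0))"
  shows "\<exists>fs. fs 0 = f \<and> compatible_tower R M phi N psi as gs fs"
proof -
  have asI: "as n \<in> I" and as_step: "leI (as n) (as (Suc n))"
    and gsJ: "gs n \<in> J" and gs_step: "leJ (gs n) (gs (Suc n))" for n
    using as gs unfolding monotone_chain_def by auto
  have next_stage: "\<exists>G\<in>mod_hom R (N (gs (Suc n))) (M (as (Suc n))).
      \<forall>x\<in>carrier (N (gs n)). phi (as n) (as (Suc n)) (G (psi (gs (Suc n)) (gs n) x)) = F x"
    if F: "F \<in> mod_hom R (N (gs n)) (M (as n))" for n F
    using extend_and_lift[OF M_inj[rule_format, OF asI] N_proj[rule_format, OF gsJ]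
        direct_systemD(2)[OF dir gsJ] inverse_systemD(2)[OF inv asI]
        direct_systemD(3)[OF dir gsJ gsJ gs_step] psi_inj[rule_format, OF gsJ gsJ gs_step]
        inverse_systemD(3)[OF inv asI asI as_step] phi_surj[rule_format, OF asI asI as_step] F] .
  obtain fs where fs: "\<forall>n. (fs n \<in> mod_hom R (N (gs n)) (M (as n)) \<and> (n = 0 \<longrightarrow> fs n = f)) \<and>
      (\<forall>x\<in>carrier (N (gs n)). phi (as n) (as (Suc n)) (fs (Suc n) (psi (gs (Suc n)) (gs n) x)) = fs n x)"
  proof (atomize_elim, rule dependent_nat_choice)
    show "\<exists>F. F \<in> mod_hom R (N (gs 0)) (M (as 0)) \<and> (0 = (0::nat) \<longrightarrow> F = f)" using f by blast
  next
    fix F and n :: nat assume "F \<in> mod_hom R (N (gs n)) (M (as n)) \<and> (n = 0 \<longrightarrow> F = f)"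
    then obtain G where "G \<in> mod_hom R (N (gs (Suc n))) (M (as (Suc n)))"
      and "\<forall>x\<in>carrier (N (gs n)). phi (as n) (as (Suc n)) (G (psi (gs (Suc n)) (gs n) x)) = F x"
      using next_stage by blast
    then show "\<exists>G. (G \<in> mod_hom R (N (gs (Suc n))) (M (as (Suc n))) \<and> (Suc n = 0 \<longrightarrow> G = f)) \<and>
        (\<forall>x\<in>carrier (N (gs n)). phi (as n) (as (Suc n)) (G (psi (gs (Suc n)) (gs n) x)) = F x)"
      by blast
  qed
  then have "fs 0 = f" and "\<forall>n. fs n \<in> mod_hom R (N (gs n)) (M (as n))"
    and "\<forall>n. \<forall>x\<in>carrier (N (gs n)).
           phi (as n) (as (Suc n)) (fs (Suc n) (psi (gs (Suc n)) (gs n) x)) = fs n x"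
    by simp_all
  then show ?thesis using tower_telescope[OF inv dir as gs] by blast
qed

(* If the transition maps of a direct system are injective, so are the canonical maps
   into its direct limit: an element dying in the limit dies at some later stage. *)
lemma direct_limit_inj:
  assumes dir: "direct_system R J leq N psi" and lim: "direct_limit R J leq N psi L iota"
    and psi_inj: "\<forall>g\<in>J. \<forall>d\<in>J. leq g d \<longrightarrow> inj_on (psi d g) (carrier (N g))"
    and g: "g \<in> J"
  shows "inj_on (iota g) (carrier (N g))"
proof (rule inj_onI)
  fix x y assume x: "x \<in> carrier (N g)" and y: "y \<in> carrier (N g)" and e: "iota g x = iota g y"
  have Ng: "left_module R (N g)" using direct_systemD(2)[OF dir g] .
  have L: "left_module R L" and iota: "iota g \<in> mod_hom R (N g) L"
    using direct_limitD(1)[OF lim] direct_limitD(2)[OF lim g] by -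
  interpret iota: abelian_group_hom "N g" L "iota g"
    using mod_hom_abelian_group_hom[OF Ng L iota] .
  have diff: "x \<ominus>\<^bsub>N g\<^esub> y \<in> carrier (N g)" using x y by simp
  have "iota g (x \<ominus>\<^bsub>N g\<^esub> y) = iota g y \<oplus>\<^bsub>L\<^esub> \<ominus>\<^bsub>L\<^esub> iota g y"
    unfolding iota.G.minus_eq using x y e by simp
  then have "iota g (x \<ominus>\<^bsub>N g\<^esub> y) = \<zero>\<^bsub>L\<^esub>"
    using y by (simp add: iota.H.r_neg)
  then obtain d where d: "d \<in> J" "leq g d" and vanish: "psi d g (x \<ominus>\<^bsub>N g\<^esub> y) = \<zero>\<^bsub>N d\<^esub>"
    using direct_limitD(5)[OF lim g diff] by blast
  have Nd: "left_module R (N d)" and psi: "psi d g \<in> mod_hom R (N g) (N d)"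
    using direct_systemD(2,3)[OF dir] g d by blast+
  interpret psi: abelian_group_hom "N g" "N d" "psi d g"
    using mod_hom_abelian_group_hom[OF Ng Nd psi] .
  have "inj_on (psi d g) (carrier (N g))" using psi_inj g d by blast
  then have "x \<ominus>\<^bsub>N g\<^esub> y = \<zero>\<^bsub>N g\<^esub>"
    by (rule inj_onD) (simp_all add: vanish diff)
  moreover have "x \<ominus>\<^bsub>N g\<^esub> y \<oplus>\<^bsub>N g\<^esub> y = x"
    using x y by (simp add: iota.G.minus_eq iota.G.add.m_assoc iota.G.l_neg)
  ultimately show "x = y" using y by simp
qed

lemma direct_limit_chain_repr:
  assumes dir: "direct_system R J leq N psi" and lim: "direct_limit R J leq N psi L iota"
    and c: "cofinal_chain J leq c" and y: "y \<in> carrier L"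
  shows "\<exists>k. \<forall>m\<ge>k. \<exists>x\<in>carrier (N (c m)). iota (c m) x = y"
proof -
  obtain g x where g: "g \<in> J" and x: "x \<in> carrier (N g)" and y_eq: "y = iota g x"
    using y direct_limitD(4)[OF lim] by blast
  obtain k where k: "\<forall>m\<ge>k. leq g (c m)"
    using c g unfolding cofinal_chain_def by blast
  have cJ: "c m \<in> J" for m using c unfolding cofinal_chain_def monotone_chain_def by blast
  have "\<exists>x\<in>carrier (N (c m)). iota (c m) x = y" if "k \<le> m" for m
  proof
    have gm: "leq g (c m)" using k that by blast
    show "psi (c m) g x \<in> carrier (N (c m))"
      using mod_hom_closed[OF direct_systemD(3)[OF dir g cJ gm] x] .
    show "iota (c m) (psi (c m) g x) = y"
      using direct_limitD(3)[OF lim g cJ gm x] y_eq by simp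
  qed
  then show ?thesis by blast
qed

lemma direct_limit_chain_common:
  assumes dir: "direct_system R J leq N psi" and lim: "direct_limit R J leq N psi L iota"
    and c: "cofinal_chain J leq c" and y1: "y1 \<in> carrier L" and y2: "y2 \<in> carrier L"
  shows "\<exists>n\<ge>k. \<exists>x1\<in>carrier (N (c n)). \<exists>x2\<in>carrier (N (c n)).
           iota (c n) x1 = y1 \<and> iota (c n) x2 = y2"
proof -
  obtain k1 where "\<forall>m\<ge>k1. \<exists>x\<in>carrier (N (c m)). iota (c m) x = y1"
    using direct_limit_chain_repr[OF dir lim c y1] by blast
  moreover obtain k2 where "\<forall>m\<ge>k2. \<exists>x\<in>carrier (N (c m)). iota (c m) x = y2"
    using direct_limit_chain_repr[OF dir lim c y2] by blast
  ultimately show ?thesis by (intro exI[of _ "max k (max k1 k2)"]) auto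
qed

(* A family F n on the stages n >= k of a cofinal chain that is compatible with the
   transition maps induces a well-defined function on the direct limit, provided the
   canonical maps are injective: two representatives of one element have equal values. *)
lemma direct_limit_chain_function:
  assumes dir: "direct_system R J leq N psi" and lim: "direct_limit R J leq N psi L iota"
    and c: "cofinal_chain J leq c"
    and iota_inj: "\<forall>n. inj_on (iota (c n)) (carrier (N (c n)))"
    and compat: "\<forall>n m. k \<le> n \<longrightarrow> n \<le> m \<longrightarrow>
                   (\<forall>x\<in>carrier (N (c n)). F m (psi (c m) (c n) x) = F n x)"
  shows "\<exists>T. \<forall>n\<ge>k. \<forall>x\<in>carrier (N (c n)). T (iota (c n) x) = F n x"
proof -
  have cJ: "c n \<in> J" and c_mono: "n \<le> m \<Longrightarrow> leq (c n) (c m)" for n m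
    using c unfolding cofinal_chain_def monotone_chain_def by blast+
  have agree_le: "F n x = F m x'"
    if "k \<le> n" "n \<le> m" "x \<in> carrier (N (c n))" "x' \<in> carrier (N (c m))"
      "iota (c n) x = iota (c m) x'" for n m x x'
  proof -
    have psi_x: "psi (c m) (c n) x \<in> carrier (N (c m))"
      using mod_hom_closed[OF direct_systemD(3)[OF dir cJ cJ c_mono[OF that(2)]] that(3)] .
    have "iota (c m) (psi (c m) (c n) x) = iota (c m) x'"
      using direct_limitD(3)[OF lim cJ cJ c_mono[OF that(2)] that(3)] that(5) by simp
    then have "psi (c m) (c n) x = x'" by (rule inj_onD[OF iota_inj[rule_format] _ psi_x that(4)])
    then show ?thesis using compat[rule_format, OF that(1-3)] by simp
  qed
  have agree: "F n x = F m x'"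
    if "k \<le> n" "k \<le> m" "x \<in> carrier (N (c n))" "x' \<in> carrier (N (c m))"
      "iota (c n) x = iota (c m) x'" for n m x x'
  proof (cases "n \<le> m")
    case True
    then show ?thesis using agree_le that by blast
  next
    case False
    then show ?thesis using agree_le[of m n x' x] that by simp
  qed
  define repr where
    "repr y = (SOME p. k \<le> fst p \<and> snd p \<in> carrier (N (c (fst p))) \<and> iota (c (fst p)) (snd p) = y)"
    for y
  have "F (fst (repr (iota (c n) x))) (snd (repr (iota (c n) x))) = F n x"
    if n: "k \<le> n" and x: "x \<in> carrier (N (c n))" for n x
  proof -
    let ?y = "iota (c n) x"
    have "k \<le> fst (n, x) \<and> snd (n, x) \<in> carrier (N (c (fst (n, x))))
          \<and> iota (c (fst (n, x))) (snd (n, x)) = ?y"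
      using n x by simp
    then have "k \<le> fst (repr ?y) \<and> snd (repr ?y) \<in> carrier (N (c (fst (repr ?y))))
               \<and> iota (c (fst (repr ?y))) (snd (repr ?y)) = ?y"
      unfolding repr_def by (rule someI)
    then show ?thesis using agree[OF _ n _ x] by blast
  qed
  then show ?thesis by (intro exI[of _ "\<lambda>y. F (fst (repr y)) (snd (repr y))"]) blast
qed

lemma direct_limit_chain_hom:
  assumes dir: "direct_system R J leq N psi" and lim: "direct_limit R J leq N psi L iota"
    and c: "cofinal_chain J leq c"
    and iota_inj: "\<forall>n. inj_on (iota (c n)) (carrier (N (c n)))"
    and F: "\<forall>n\<ge>k. F n \<in> mod_hom R (N (c n)) X"
    and compat: "\<forall>n m. k \<le> n \<longrightarrow> n \<le> m \<longrightarrow>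
                   (\<forall>x\<in>carrier (N (c n)). F m (psi (c m) (c n) x) = F n x)"
  shows "\<exists>T\<in>mod_hom R L X. \<forall>n\<ge>k. \<forall>x\<in>carrier (N (c n)). T (iota (c n) x) = F n x"
proof -
  have cJ: "c n \<in> J" for n using c unfolding cofinal_chain_def monotone_chain_def by blast
  have Nc: "left_module R (N (c n))" for n using direct_systemD(2)[OF dir cJ] .
  have iota_hom: "iota (c n) \<in> mod_hom R (N (c n)) L" for n using direct_limitD(2)[OF lim cJ] .
  obtain T where T_eq: "\<And>n x. k \<le> n \<Longrightarrow> x \<in> carrier (N (c n)) \<Longrightarrow> T (iota (c n) x) = F n x"
    using direct_limit_chain_function[OF dir lim c iota_inj compat] by blast
  have common: "\<exists>n\<ge>k. \<exists>x1\<in>carrier (N (c n)). \<exists>x2\<in>carrier (N (c n)).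
                   iota (c n) x1 = y1 \<and> iota (c n) x2 = y2"
    if "y1 \<in> carrier L" and "y2 \<in> carrier L" for y1 y2
    using direct_limit_chain_common[OF dir lim c that] .
  have "T \<in> mod_hom R L X"
    unfolding mod_hom_def
  proof (intro CollectI conjI ballI funcsetI)
    fix y assume "y \<in> carrier L"
    then obtain n x where "k \<le> n" "x \<in> carrier (N (c n))" "iota (c n) x = y"
      using common by blast
    then show "T y \<in> carrier X" using T_eq mod_hom_closed[OF F[rule_format]] by auto
  next
    fix y z assume "y \<in> carrier L" "z \<in> carrier L"
    then obtain n x1 x2 where n: "k \<le> n" and x: "x1 \<in> carrier (N (c n))" "x2 \<in> carrier (N (c n))"
      and yz: "iota (c n) x1 = y" "iota (c n) x2 = z"
      using common by blast
    have "T (y \<oplus>\<^bsub>L\<^esub> z) = T (iota (c n) (x1 \<oplus>\<^bsub>N (c n)\<^esub> x2))"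
      using mod_hom_add[OF iota_hom x] yz by simp
    also have "\<dots> = F n x1 \<oplus>\<^bsub>X\<^esub> F n x2"
      using T_eq[OF n left_module_add_closed[OF Nc x]] mod_hom_add[OF F[rule_format, OF n] x] by simp
    finally show "T (y \<oplus>\<^bsub>L\<^esub> z) = T y \<oplus>\<^bsub>X\<^esub> T z"
      using T_eq[OF n x(1)] T_eq[OF n x(2)] yz by simp
  next
    fix r y assume r: "r \<in> carrier R" and "y \<in> carrier L"
    then obtain n x where n: "k \<le> n" and x: "x \<in> carrier (N (c n))" and y: "iota (c n) x = y"
      using common by blast
    have "T (r \<odot>\<^bsub>L\<^esub> y) = T (iota (c n) (r \<odot>\<^bsub>N (c n)\<^esub> x))"
      using mod_hom_smult[OF iota_hom r x] y by simp
    also have "\<dots> = r \<odot>\<^bsub>X\<^esub> F n x"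
      using T_eq[OF n left_module_smult_closed[OF Nc r x]] mod_hom_smult[OF F[rule_format, OF n] r x]
      by simp
    finally show "T (r \<odot>\<^bsub>L\<^esub> y) = r \<odot>\<^bsub>X\<^esub> T y" using T_eq[OF n x] y by simp
  qed
  then show ?thesis using T_eq by blast
qed

lemma inverse_limit_hom:
  assumes lim: "inverse_limit R I leq M phi L pi" and X: "left_module R X"
    and T: "\<forall>a\<in>I. T a \<in> mod_hom R X (M a)"
    and compat: "\<forall>a\<in>I. \<forall>b\<in>I. leq a b \<longrightarrow> (\<forall>x\<in>carrier X. phi a b (T b x) = T a x)"
  shows "\<exists>h\<in>mod_hom R X L. \<forall>a\<in>I. \<forall>x\<in>carrier X. pi a (h x) = T a x"
proof -
  have L: "left_module R L" using inverse_limitD(1)[OF lim] .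
  have pi: "pi a \<in> mod_hom R L (M a)" if "a \<in> I" for a using inverse_limitD(2)[OF lim that] .
  have thread: "\<exists>!z. z \<in> carrier L \<and> (\<forall>a\<in>I. pi a z = T a x)" if x: "x \<in> carrier X" for x
  proof (rule inverse_limitD(3)[OF lim])
    show "\<forall>a\<in>I. T a x \<in> carrier (M a)" using mod_hom_closed[OF T[rule_format] x] by blast
    show "\<forall>a\<in>I. \<forall>b\<in>I. leq a b \<longrightarrow> phi a b (T b x) = T a x" using compat x by blast
  qed
  define h where "h x = (THE z. z \<in> carrier L \<and> (\<forall>a\<in>I. pi a z = T a x))" for x
  have h: "h x \<in> carrier L" "\<forall>a\<in>I. pi a (h x) = T a x" if "x \<in> carrier X" for x
    unfolding h_def using theI'[OF thread[OF that]] by simp_all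
  have h_unique: "h x = z" if "x \<in> carrier X" "z \<in> carrier L" "\<forall>a\<in>I. pi a z = T a x" for x z
    using thread[OF that(1)] h[OF that(1)] that(2,3) by blast
  have "h \<in> mod_hom R X L"
    unfolding mod_hom_def
  proof (intro CollectI conjI ballI funcsetI)
    fix x assume "x \<in> carrier X"
    then show "h x \<in> carrier L" using h by blast
  next
    fix x y assume x: "x \<in> carrier X" and y: "y \<in> carrier X"
    show "h (x \<oplus>\<^bsub>X\<^esub> y) = h x \<oplus>\<^bsub>L\<^esub> h y"
    proof (rule h_unique)
      show "x \<oplus>\<^bsub>X\<^esub> y \<in> carrier X" using left_module_add_closed[OF X x y] .
      show "h x \<oplus>\<^bsub>L\<^esub> h y \<in> carrier L" using left_module_add_closed[OF L h(1)[OF x] h(1)[OF y]] .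
      show "\<forall>a\<in>I. pi a (h x \<oplus>\<^bsub>L\<^esub> h y) = T a (x \<oplus>\<^bsub>X\<^esub> y)"
        using mod_hom_add[OF pi h(1)[OF x] h(1)[OF y]] mod_hom_add[OF T[rule_format] x y] h x y
        by simp
    qed
  next
    fix r x assume r: "r \<in> carrier R" and x: "x \<in> carrier X"
    show "h (r \<odot>\<^bsub>X\<^esub> x) = r \<odot>\<^bsub>L\<^esub> h x"
    proof (rule h_unique)
      show "r \<odot>\<^bsub>X\<^esub> x \<in> carrier X" using left_module_smult_closed[OF X r x] .
      show "r \<odot>\<^bsub>L\<^esub> h x \<in> carrier L" using left_module_smult_closed[OF L r h(1)[OF x]] .
      show "\<forall>a\<in>I. pi a (r \<odot>\<^bsub>L\<^esub> h x) = T a (r \<odot>\<^bsub>X\<^esub> x)"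
        using mod_hom_smult[OF pi r h(1)[OF x]] mod_hom_smult[OF T[rule_format] r x] h x by simp
    qed
  qed
  then show ?thesis using h by blast
qed

lemma tower_stage_hom:
  assumes inv: "inverse_system R I leI M phi" and dir: "direct_system R J leJ N psi"
    and lim: "direct_limit R J leJ N psi L iota"
    and iota_inj: "\<forall>g\<in>J. inj_on (iota g) (carrier (N g))"
    and as: "cofinal_chain I leI as" and gs: "cofinal_chain J leJ gs"
    and tower: "compatible_tower R M phi N psi as gs fs"
    and a: "a \<in> I"
  shows "\<exists>T\<in>mod_hom R L (M a). \<exists>k. \<forall>m\<ge>k. leI a (as m) \<and>
           (\<forall>x\<in>carrier (N (gs m)). T (iota (gs m) x) = phi a (as m) (fs m x))"
proof -
  have asI: "as n \<in> I" and as_mono: "n \<le> m \<Longrightarrow> leI (as n) (as m)"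
    and gsJ: "gs n \<in> J" and gs_mono: "n \<le> m \<Longrightarrow> leJ (gs n) (gs m)" for n m
    using as gs unfolding cofinal_chain_def monotone_chain_def by blast+
  have fs: "fs n \<in> mod_hom R (N (gs n)) (M (as n))"
    and fs_compat: "\<forall>x\<in>carrier (N (gs n)). phi (as n) (as m) (fs m (psi (gs m) (gs n) x)) = fs n x"
    if "n \<le> m" for n m
    using tower that unfolding compatible_tower_def by blast+
  obtain k where k: "\<forall>m\<ge>k. leI a (as m)" using as a unfolding cofinal_chain_def by blast
  have "\<forall>m\<ge>k. (\<lambda>x. phi a (as m) (fs m x)) \<in> mod_hom R (N (gs m)) (M a)"
    using mod_hom_comp[OF inverse_systemD(3)[OF inv a asI] fs] k by blast
  moreover have "\<forall>n m. k \<le> n \<longrightarrow> n \<le> m \<longrightarrow> (\<forall>x\<in>carrier (N (gs n)).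
      phi a (as m) (fs m (psi (gs m) (gs n) x)) = phi a (as n) (fs n x))"
  proof (intro allI impI ballI)
    fix n m x assume n: "k \<le> n" and nm: "n \<le> m" and x: "x \<in> carrier (N (gs n))"
    let ?z = "fs m (psi (gs m) (gs n) x)"
    have z: "?z \<in> carrier (M (as m))"
      using mod_hom_closed[OF fs mod_hom_closed[OF direct_systemD(3)[OF dir gsJ gsJ gs_mono[OF nm]] x]]
      by blast
    have "phi a (as m) ?z = phi a (as n) (phi (as n) (as m) ?z)"
      using inverse_systemD(5)[OF inv a asI asI _ as_mono[OF nm] z] k n by simp
    also have "\<dots> = phi a (as n) (fs n x)" using fs_compat[OF nm] x by simp
    finally show "phi a (as m) ?z = phi a (as n) (fs n x)" .
  qed
  ultimately obtain T where "T \<in> mod_hom R L (M a)"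
    and "\<forall>m\<ge>k. \<forall>x\<in>carrier (N (gs m)). T (iota (gs m) x) = phi a (as m) (fs m x)"
    using direct_limit_chain_hom[OF dir lim gs, of k "\<lambda>m x. phi a (as m) (fs m x)"] iota_inj gsJ
    by blast
  then show ?thesis using k by blast
qed

lemma tower_cone:
  assumes inv: "inverse_system R I leI M phi" and dir: "direct_system R J leJ N psi"
    and lim: "direct_limit R J leJ N psi L iota"
    and iota_inj: "\<forall>g\<in>J. inj_on (iota g) (carrier (N g))"
    and as: "cofinal_chain I leI as" and gs: "cofinal_chain J leJ gs"
    and tower: "compatible_tower R M phi N psi as gs fs"
  shows "\<exists>T. (\<forall>a\<in>I. T a \<in> mod_hom R L (M a)) \<and>
             (\<forall>a\<in>I. \<forall>b\<in>I. leI a b \<longrightarrow> (\<forall>y\<in>carrier L. phi a b (T b y) = T a y)) \<and>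
             (\<forall>n. \<forall>x\<in>carrier (N (gs n)). T (as n) (iota (gs n) x) = fs n x)"
proof -
  have asI: "as n \<in> I"
    and gsJ: "gs n \<in> J" and gs_mono: "n \<le> m \<Longrightarrow> leJ (gs n) (gs m)" for n m
    using as gs unfolding cofinal_chain_def monotone_chain_def by blast+
  from tower_stage_hom[OF inv dir lim iota_inj as gs tower]
  have "\<forall>a\<in>I. \<exists>T. T \<in> mod_hom R L (M a) \<and> (\<exists>k. \<forall>m\<ge>k. leI a (as m) \<and>
           (\<forall>x\<in>carrier (N (gs m)). T (iota (gs m) x) = phi a (as m) (fs m x)))" by blast
  from bchoice[OF this] obtain T where T: "\<forall>a\<in>I. T a \<in> mod_hom R L (M a) \<and> (\<exists>k. \<forall>m\<ge>k.
      leI a (as m) \<and> (\<forall>x\<in>carrier (N (gs m)). T a (iota (gs m) x) = phi a (as m) (fs m x)))" ..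
  from T have "\<forall>a\<in>I. \<exists>k. \<forall>m\<ge>k. leI a (as m) \<and>
      (\<forall>x\<in>carrier (N (gs m)). T a (iota (gs m) x) = phi a (as m) (fs m x))" by blast
  from bchoice[OF this] obtain K where K: "\<forall>a\<in>I. \<forall>m\<ge>K a. leI a (as m) \<and>
      (\<forall>x\<in>carrier (N (gs m)). T a (iota (gs m) x) = phi a (as m) (fs m x))" ..
  have "phi a b (T b y) = T a y" if a: "a \<in> I" and b: "b \<in> I" and ab: "leI a b"
    and y: "y \<in> carrier L" for a b y
  proof -
    obtain k where rep: "\<forall>m\<ge>k. \<exists>x\<in>carrier (N (gs m)). iota (gs m) x = y"
      using direct_limit_chain_repr[OF dir lim gs y] by blast
    define m where "m = max k (max (K a) (K b))"
    have m: "k \<le> m" "K a \<le> m" "K b \<le> m" unfolding m_def by simp_all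
    then obtain x where x: "x \<in> carrier (N (gs m))" and y_eq: "y = iota (gs m) x"
      using rep by metis
    have fx: "fs m x \<in> carrier (M (as m))"
      using mod_hom_closed[OF _ x] tower unfolding compatible_tower_def by blast
    have "phi a b (T b y) = phi a b (phi b (as m) (fs m x))" using K b m x y_eq by simp
    also have "\<dots> = phi a (as m) (fs m x)"
      using inverse_systemD(5)[OF inv a b asI ab _ fx] K b m by simp
    also have "\<dots> = T a y" using K a m x y_eq by simp
    finally show ?thesis .
  qed
  moreover have "T (as n) (iota (gs n) x) = fs n x" if x: "x \<in> carrier (N (gs n))" for n x
  proof -
    define m where "m = max n (K (as n))"
    have nm: "n \<le> m" unfolding m_def by simp
    have "iota (gs n) x = iota (gs m) (psi (gs m) (gs n) x)"
      using direct_limitD(3)[OF lim gsJ gsJ gs_mono[OF nm] x] by simp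
    also have "T (as n) \<dots> = phi (as n) (as m) (fs m (psi (gs m) (gs n) x))"
      using K asI mod_hom_closed[OF direct_systemD(3)[OF dir gsJ gsJ gs_mono[OF nm]] x]
      unfolding m_def by simp
    also have "\<dots> = fs n x" using tower nm x unfolding compatible_tower_def by blast
    finally show ?thesis .
  qed
  ultimately show ?thesis using T by blast
qed

theorem lemma5:
  fixes R :: "'a ring"
    and I :: "'i set" and leI :: "'i \<Rightarrow> 'i \<Rightarrow> bool"
    and M :: "'i \<Rightarrow> ('a, 'm) module" and phi :: "'i \<Rightarrow> 'i \<Rightarrow> 'm \<Rightarrow> 'm"
    and Mlim :: "('a, 'l) module" and pi :: "'i \<Rightarrow> 'l \<Rightarrow> 'm"
    and J :: "'j set" and leJ :: "'j \<Rightarrow> 'j \<Rightarrow> bool"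
    and N :: "'j \<Rightarrow> ('a, 'n) module" and psi :: "'j \<Rightarrow> 'j \<Rightarrow> 'n \<Rightarrow> 'n"
    and Nlim :: "('a, 'k) module" and iota :: "'j \<Rightarrow> 'n \<Rightarrow> 'k"
    and \<gamma> :: 'j and \<alpha> :: 'i and f :: "'n \<Rightarrow> 'm"
  assumes R: "ring R"
    and I_countable: "countable I"
    and inv_sys: "inverse_system R I leI M phi"
    and phi_surj: "\<forall>a\<in>I. \<forall>b\<in>I. leI a b \<longrightarrow> phi a b ` carrier (M b) = carrier (M a)"
    and M_inj: "\<forall>a\<in>I. injective_module R (M a)"
    and M_inj_N: "\<forall>a\<in>I. injective_module_wrt TYPE('n) TYPE('n) R (M a)"
    and Mlim_lim: "inverse_limit R I leI M phi Mlim pi"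
    and J_countable: "countable J"
    and dir_sys: "direct_system R J leJ N psi"
    and psi_inj: "\<forall>g\<in>J. \<forall>d\<in>J. leJ g d \<longrightarrow> inj_on (psi d g) (carrier (N g))"
    and N_proj: "\<forall>g\<in>J. projective_module R (N g)"
    and N_proj_M: "\<forall>g\<in>J. projective_module_wrt TYPE('m) TYPE('m) R (N g)"
    and Nlim_lim: "direct_limit R J leJ N psi Nlim iota"
    and \<gamma>: "\<gamma> \<in> J" and \<alpha>: "\<alpha> \<in> I"
    and f: "f \<in> mod_hom R (N \<gamma>) (M \<alpha>)"
  shows "\<exists>h \<in> mod_hom R Nlim Mlim. \<forall>x\<in>carrier (N \<gamma>). f x = pi \<alpha> (h (iota \<gamma> x))"
proof -
  obtain as where as: "cofinal_chain I leI as" and as0: "as 0 = \<alpha>"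
    using cofinal_chain_exists[OF inverse_systemD(1)[OF inv_sys] I_countable \<alpha>] by blast
  obtain gs where gs: "cofinal_chain J leJ gs" and gs0: "gs 0 = \<gamma>"
    using cofinal_chain_exists[OF direct_systemD(1)[OF dir_sys] J_countable \<gamma>] by blast
  obtain fs where fs0: "fs 0 = f" and tower: "compatible_tower R M phi N psi as gs fs"
    using tower_exists[OF inv_sys phi_surj M_inj_N dir_sys psi_inj N_proj_M] as gs f as0 gs0
    unfolding cofinal_chain_def by blast
  have iota_inj: "\<forall>g\<in>J. inj_on (iota g) (carrier (N g))"
    using direct_limit_inj[OF dir_sys Nlim_lim psi_inj] by blast
  obtain T where T_hom: "\<forall>a\<in>I. T a \<in> mod_hom R Nlim (M a)"
    and T_compat: "\<forall>a\<in>I. \<forall>b\<in>I. leI a b \<longrightarrow> (\<forall>y\<in>carrier Nlim. phi a b (T b y) = T a y)"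
    and T_fs: "\<forall>n. \<forall>x\<in>carrier (N (gs n)). T (as n) (iota (gs n) x) = fs n x"
    using tower_cone[OF inv_sys dir_sys Nlim_lim iota_inj as gs tower] by blast
  obtain h where h: "h \<in> mod_hom R Nlim Mlim"
    and pi_h: "\<forall>a\<in>I. \<forall>y\<in>carrier Nlim. pi a (h y) = T a y"
    using inverse_limit_hom[OF Mlim_lim direct_limitD(1)[OF Nlim_lim] T_hom T_compat] by blast
  have "f x = pi \<alpha> (h (iota \<gamma> x))" if x: "x \<in> carrier (N \<gamma>)" for x
    using pi_h \<alpha> mod_hom_closed[OF direct_limitD(2)[OF Nlim_lim \<gamma>] x] T_fs x as0 gs0 fs0 by force
  then show ?thesis using h by blast
qed

end
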